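(* Let $n\ge1$ and let $\Phi=\Phi(A,O,Y,\bar{\mathbf d})$ be an $n$-mode Gaussian superchannel, with $A=(a_{kl})$, $Y=(y_{kl})$ and $\bar{\mathbf d}=(\bar d_1,\dots,\bar d_{2n})^{\mathrm T}$. Then $\Phi$ is imaginarity breaking (i.e. $\Phi(\phi)$ is a real Gaussian channel for every $n$-mode Gaussian channel $\phi$) if and only if $\bar d_{2k}=0$, $y_{2k-1,2l}=0$ and $a_{2k,2l-1}=a_{2k,2l}=0$ for all $k,l\in\{1,\dots,n\}$.
   Context: Fix $n\ge1$. Let $\Delta_n=\bigoplus_{k=1}^n\begin{pmatrix}0&1\\-1&0\end{pmatrix}$ and $\Sigma_n=\bigoplus_{k=1}^n\begin{pmatrix}1&0\\0&-1\end{pmatrix}$ (both $2n\times2n$). An $n$-mode Gaussian channel is identified with a triple $\phi=\phi(T,N,\mathbf d)$, where $T=(t_{kl})$ and $N=(n_{kl})$ are real $2n\times 2n$ matrices with $N=N^{\mathrm T}\ge0$, $\mathbf d=(d_1,\dots,d_{2n})^{\mathrm T}\in\mathbb R^{2n}$, and $N+i\Delta_n-iT\Delta_nT^{\mathrm T}\ge0$. Such a channel is called real if $d_{2k}=0$ and $n_{2k-1,2l}=0$ for all $k,l\in\{1,\dots,n\}$, and either $t_{2k,2l-1}=t_{2k,2l}=0$ for all $k,l$, or $t_{2k-1,2l}=t_{2k,2l-1}=0$ for all $k,l$. An $n$-mode Gaussian superchannel is identified with a quadruple $\Phi=\Phi(A,O,Y,\bar{\mathbf d})$ of real $2n\times2n$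 matrices $A,O,Y$ and a vector $\bar{\mathbf d}\in\mathbb R^{2n}$ with $Y=Y^{\mathrm T}$, $OO^{\mathrm T}=I_{2n}$, $Y+i\Delta_n-iA\Delta_nA^{\mathrm T}\ge0$ and $i\Delta_n-iO\Delta_nO^{\mathrm T}\ge0$; it acts on Gaussian channels by $\Phi(\phi(T,N,\mathbf d))=\phi(AT\Sigma_nO^{\mathrm T}\Sigma_n,\ ANA^{\mathrm T}+Y,\ A\mathbf d+\bar{\mathbf d})$. *)

theory Defs
  imports Complex_Main
begin

text \<open>Real 2n x 2n matrices and vectors in R^2n are represented as functions on
  natural-number indices; only indices in {1..2*n} (1-based, as in the paper) matter.\<close>

type_synonym rmat = "nat \<Rightarrow> nat \<Rightarrow> real"
type_synonym rvec = "nat \<Rightarrow> real"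

definition idx :: "nat \<Rightarrow> nat set" where
  "idx n = {1..2*n}"

definition mmul :: "nat \<Rightarrow> rmat \<Rightarrow> rmat \<Rightarrow> rmat" where
  "mmul n X Z = (\<lambda>i j. \<Sum>k\<in>idx n. X i k * Z k j)"

definition mvec :: "nat \<Rightarrow> rmat \<Rightarrow> rvec \<Rightarrow> rvec" where
  "mvec n X v = (\<lambda>i. \<Sum>k\<in>idx n. X i k * v k)"

definition mtr :: "rmat \<Rightarrow> rmat" where
  "mtr X = (\<lambda>i j. X j i)"

definition madd :: "rmat \<Rightarrow> rmat \<Rightarrow> rmat" where
  "madd X Z = (\<lambda>i j. X i j + Z i j)"

definition vadd :: "rvec \<Rightarrow> rvec \<Rightarrow> rvec" where
  "vadd v w = (\<lambda>i. v i + w i)"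

definition idm :: rmat where
  "idm = (\<lambda>i j. if i = j then 1 else 0)"

text \<open>Delta_n = direct sum of n copies of [[0,1],[-1,0]] (1-based indices).\<close>
definition Delta :: "nat \<Rightarrow> rmat" where
  "Delta n = (\<lambda>i j. if i \<in> idx n \<and> j \<in> idx n then
       (if odd i \<and> j = i + 1 then 1 else if even i \<and> i = j + 1 then -1 else 0) else 0)"

definition Sigma :: "nat \<Rightarrow> rmat" where
  "Sigma n = (\<lambda>i j. if i \<in> idx n \<and> j \<in> idx n \<and> i = j then (if odd i then 1 else -1) else 0)"

definition symm :: "nat \<Rightarrow> rmat \<Rightarrow> bool" where
  "symm n X \<longleftrightarrow> (\<forall>i\<in>idx n. \<forall>j\<in>idx n. X i j = X j i)"

definition rpsd :: "nat \<Rightarrow> rmat \<Rightarrow> bool" where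
  "rpsd n X \<longleftrightarrow> (\<forall>x::nat \<Rightarrow> real. (\<Sum>k\<in>idx n. \<Sum>l\<in>idx n. x k * X k l * x l) \<ge> 0)"

definition cpsd :: "nat \<Rightarrow> (nat \<Rightarrow> nat \<Rightarrow> complex) \<Rightarrow> bool" where
  "cpsd n M \<longleftrightarrow> (\<forall>z::nat \<Rightarrow> complex.
      (\<Sum>k\<in>idx n. \<Sum>l\<in>idx n. cnj (z k) * M k l * z l) \<in> \<real> \<and>
      Re (\<Sum>k\<in>idx n. \<Sum>l\<in>idx n. cnj (z k) * M k l * z l) \<ge> 0)"

definition uncert :: "nat \<Rightarrow> rmat \<Rightarrow> rmat \<Rightarrow> (nat \<Rightarrow> nat \<Rightarrow> complex)" where
  "uncert n X B = (\<lambda>i j. complex_of_real (X i j) + \<i> * complex_of_real (Delta n i j)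
      - \<i> * complex_of_real (mmul n (mmul n B (Delta n)) (mtr B) i j))"

definition gaussian_channel :: "nat \<Rightarrow> rmat \<Rightarrow> rmat \<Rightarrow> rvec \<Rightarrow> bool" where
  "gaussian_channel n T N d \<longleftrightarrow> symm n N \<and> rpsd n N \<and> cpsd n (uncert n N T)"

definition real_channel :: "nat \<Rightarrow> rmat \<Rightarrow> rmat \<Rightarrow> rvec \<Rightarrow> bool" where
  "real_channel n T N d \<longleftrightarrow>
     (\<forall>k\<in>{1..n}. d (2*k) = 0) \<and>
     (\<forall>k\<in>{1..n}. \<forall>l\<in>{1..n}. N (2*k-1) (2*l) = 0) \<and>
     ((\<forall>k\<in>{1..n}. \<forall>l\<in>{1..n}. T (2*k) (2*l-1) = 0 \<and> T (2*k) (2*l) = 0) \<or>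
      (\<forall>k\<in>{1..n}. \<forall>l\<in>{1..n}. T (2*k-1) (2*l) = 0 \<and> T (2*k) (2*l-1) = 0))"

definition gaussian_superchannel :: "nat \<Rightarrow> rmat \<Rightarrow> rmat \<Rightarrow> rmat \<Rightarrow> rvec \<Rightarrow> bool" where
  "gaussian_superchannel n A Om Y db \<longleftrightarrow>
     symm n Y \<and> (\<forall>i\<in>idx n. \<forall>j\<in>idx n. mmul n Om (mtr Om) i j = idm i j) \<and>
     cpsd n (uncert n Y A) \<and> cpsd n (uncert n (\<lambda>_ _. 0) Om)"

definition sc_T :: "nat \<Rightarrow> rmat \<Rightarrow> rmat \<Rightarrow> rmat \<Rightarrow> rmat" where
  "sc_T n A Om T = mmul n (mmul n (mmul n A T) (Sigma n)) (mmul n (mtr Om) (Sigma n))"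

definition sc_N :: "nat \<Rightarrow> rmat \<Rightarrow> rmat \<Rightarrow> rmat \<Rightarrow> rmat" where
  "sc_N n A Y N = madd (mmul n (mmul n A N) (mtr A)) Y"

definition sc_d :: "nat \<Rightarrow> rmat \<Rightarrow> rvec \<Rightarrow> rvec \<Rightarrow> rvec" where
  "sc_d n A db d = vadd (mvec n A d) db"

definition imaginarity_breaking :: "nat \<Rightarrow> rmat \<Rightarrow> rmat \<Rightarrow> rmat \<Rightarrow> rvec \<Rightarrow> bool" where
  "imaginarity_breaking n A Om Y db \<longleftrightarrow>
     (\<forall>T N d. gaussian_channel n T N d \<longrightarrow>
        real_channel n (sc_T n A Om T) (sc_N n A Y N) (sc_d n A db d))"

end

theory Submission
  imports Defs
begin

text \<open>Necessity: feed \<Phi> the identity channel with zero noise and an arbitrary displacement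
  \<open>d\<close>, which is a Gaussian channel. The output has noise matrix \<open>Y\<close> and displacement
  \<open>A d + db\<close>; taking \<open>d = 0\<close> and then \<open>d\<close> a unit vector forces the even entries of \<open>db\<close>
  and the even rows of \<open>A\<close> to vanish. Sufficiency: once the even rows of \<open>A\<close> vanish, so do
  the even rows of \<open>A T \<Sigma> O\<^sup>T \<Sigma>\<close> and of \<open>A d\<close>, and the (odd, even) entries of \<open>A N A\<^sup>T\<close>,
  whatever \<open>T\<close>, \<open>N\<close>, \<open>d\<close> are.\<close>

lemma idx_cases:
  assumes "m \<in> idx n"
  obtains l where "l \<in> {1..n}" "m = 2*l - 1" | l where "l \<in> {1..n}" "m = 2*l"
proof (cases "even m")
  case True
  then show ?thesis using assms that(2)[of "m div 2"] by (auto simp: idx_def)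
next
  case False
  then show ?thesis using assms that(1)[of "(m+1) div 2"] by (auto simp: idx_def elim!: oddE)
qed

definition even_rows_vanish :: "nat \<Rightarrow> rmat \<Rightarrow> bool" where
  "even_rows_vanish n A \<longleftrightarrow> (\<forall>k\<in>{1..n}. \<forall>m\<in>idx n. A (2*k) m = 0)"

lemma even_rows_vanish_iff:
  "even_rows_vanish n A \<longleftrightarrow>
     (\<forall>k\<in>{1..n}. \<forall>l\<in>{1..n}. A (2*k) (2*l-1) = 0 \<and> A (2*k) (2*l) = 0)"
proof
  assume "even_rows_vanish n A"
  moreover have "2*l - 1 \<in> idx n" "2*l \<in> idx n" if "l \<in> {1..n}" for l
    using that by (auto simp: idx_def)
  ultimately show "\<forall>k\<in>{1..n}. \<forall>l\<in>{1..n}. A (2*k) (2*l-1) = 0 \<and> A (2*k) (2*l) = 0"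
    unfolding even_rows_vanish_def by blast
next
  assume "\<forall>k\<in>{1..n}. \<forall>l\<in>{1..n}. A (2*k) (2*l-1) = 0 \<and> A (2*k) (2*l) = 0"
  then show "even_rows_vanish n A"
    unfolding even_rows_vanish_def by (auto elim: idx_cases)
qed

lemma idm_mul_left: "mmul n idm X = (\<lambda>i j. if i \<in> idx n then X i j else 0)"
proof -
  have "(if i = k then 1 else 0) * X k j = (if k = i then X k j else 0)" for i k j :: nat
    by simp
  then show ?thesis unfolding mmul_def idm_def by (auto simp: idx_def)
qed

lemma idm_mul_right: "mmul n X idm = (\<lambda>i j. if j \<in> idx n then X i j else 0)"
  unfolding mmul_def idm_def by (auto simp: idx_def if_distrib cong: if_cong)

lemma mtr_idm: "mtr idm = idm"
  unfolding mtr_def idm_def by (auto simp: fun_eq_iff)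

lemma Delta_outside_idx: "i \<notin> idx n \<or> j \<notin> idx n \<Longrightarrow> Delta n i j = 0"
  unfolding Delta_def by auto

lemma gaussian_channel_identity: "gaussian_channel n idm (\<lambda>_ _. 0) d"
proof -
  have "mmul n (mmul n idm (Delta n)) (mtr idm) = Delta n"
    unfolding mtr_idm idm_mul_left idm_mul_right using Delta_outside_idx by (auto simp: fun_eq_iff)
  then have "uncert n (\<lambda>_ _. 0) idm = (\<lambda>_ _. 0)"
    unfolding uncert_def by auto
  then show ?thesis
    unfolding gaussian_channel_def symm_def rpsd_def cpsd_def by simp
qed

lemma sc_N_zero_noise: "sc_N n A Y (\<lambda>_ _. 0) = Y"
  unfolding sc_N_def madd_def mmul_def by simp

lemma mvec_unit:
  assumes "m \<in> idx n"
  shows "mvec n X (\<lambda>j. if j = m then 1 else 0) i = X i m"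
  using assms by (simp add: mvec_def if_distrib cong: if_cong) (simp add: idx_def)

lemma imaginarity_breaking_necessary:
  assumes "imaginarity_breaking n A Om Y db"
  shows "\<forall>k\<in>{1..n}. db (2*k) = 0"
    and "\<forall>k\<in>{1..n}. \<forall>l\<in>{1..n}. Y (2*k-1) (2*l) = 0"
    and "even_rows_vanish n A"
proof -
  have real: "real_channel n (sc_T n A Om idm) Y (sc_d n A db d)" for d
  proof -
    have "real_channel n (sc_T n A Om idm) (sc_N n A Y (\<lambda>_ _. 0)) (sc_d n A db d)"
      using assms gaussian_channel_identity unfolding imaginarity_breaking_def by blast
    then show ?thesis by (simp only: sc_N_zero_noise)
  qed
  have displacement: "mvec n A d (2*k) + db (2*k) = 0" if "k \<in> {1..n}" for k d
    using real[of d] that unfolding real_channel_def sc_d_def vadd_def by auto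
  show db: "\<forall>k\<in>{1..n}. db (2*k) = 0"
    using displacement[of _ "\<lambda>_. 0"] by (simp add: mvec_def)
  show "\<forall>k\<in>{1..n}. \<forall>l\<in>{1..n}. Y (2*k-1) (2*l) = 0"
    using real unfolding real_channel_def by blast
  show "even_rows_vanish n A"
    unfolding even_rows_vanish_def
  proof (intro ballI)
    fix k m assume k: "k \<in> {1..n}" and m: "m \<in> idx n"
    show "A (2*k) m = 0"
      using displacement[OF k, of "\<lambda>j. if j = m then 1 else 0"] db k
      by (simp add: mvec_unit[OF m])
  qed
qed

lemma imaginarity_breaking_sufficient:
  assumes db: "\<forall>k\<in>{1..n}. db (2*k) = 0"
    and Y: "\<forall>k\<in>{1..n}. \<forall>l\<in>{1..n}. Y (2*k-1) (2*l) = 0"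
    and A: "even_rows_vanish n A"
  shows "imaginarity_breaking n A Om Y db"
  unfolding imaginarity_breaking_def
proof (intro allI impI)
  fix T N d
  have "sc_T n A Om T (2*k) j = 0" if "k \<in> {1..n}" for k j
    using A that unfolding sc_T_def mmul_def even_rows_vanish_def by simp
  moreover have "sc_N n A Y N (2*k-1) (2*l) = 0" if "k \<in> {1..n}" "l \<in> {1..n}" for k l
    using A Y that unfolding sc_N_def madd_def mmul_def mtr_def even_rows_vanish_def by simp
  moreover have "sc_d n A db d (2*k) = 0" if "k \<in> {1..n}" for k
    using A db that unfolding sc_d_def vadd_def mvec_def even_rows_vanish_def by simp
  ultimately show "real_channel n (sc_T n A Om T) (sc_N n A Y N) (sc_d n A db d)"
    unfolding real_channel_def by auto
qed

theorem theorem2: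
  fixes n :: nat and A Om Y :: rmat and db :: rvec
  assumes "n \<ge> 1"
    and "gaussian_superchannel n A Om Y db"
  shows "imaginarity_breaking n A Om Y db \<longleftrightarrow>
     (\<forall>k\<in>{1..n}. db (2*k) = 0) \<and>
     (\<forall>k\<in>{1..n}. \<forall>l\<in>{1..n}. Y (2*k-1) (2*l) = 0) \<and>
     (\<forall>k\<in>{1..n}. \<forall>l\<in>{1..n}. A (2*k) (2*l-1) = 0 \<and> A (2*k) (2*l) = 0)"
  unfolding even_rows_vanish_iff[symmetric]
proof
  assume "imaginarity_breaking n A Om Y db"
  then show "(\<forall>k\<in>{1..n}. db (2*k) = 0) \<and>
     (\<forall>k\<in>{1..n}. \<forall>l\<in>{1..n}. Y (2*k-1) (2*l) = 0) \<and> even_rows_vanish n A"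
    using imaginarity_breaking_necessary by blast
qed (use imaginarity_breaking_sufficient in blast)

end
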